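(* Let $k\ge3$ and $A,B\in\mathbb F_2^{k\times k}$. Suppose (1) the $k\times 2k$ matrix $[A\,|\,B]$ has rank $k$, and (2) $AEB^T+BE^{-T}A^T=0$ for every $E\in GL(k,\mathbb F_2)$. Then $A=0$ or $B=0$.
   Context: Arithmetic over $\mathbb F_2$; $E^{-T}=(E^{-1})^T$. *)

theory Defs
  imports "HOL-Analysis.Analysis" "HOL-Library.Z2"
begin

definition hcat :: "'a^'n^'m \<Rightarrow> 'a^'p^'m \<Rightarrow> 'a^('n + 'p)^'m" where
  "hcat A B = (\<chi> i. \<chi> j. (case j of Inl a \<Rightarrow> A $ i $ a | Inr b \<Rightarrow> B $ i $ b))"

end

theory Submission
  imports Defs
begin

text \<open>Testing the hypothesis with \<open>E = I\<close> and with the transvection \<open>E = I + e\<^sub>i\<^sub>j\<close>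
  (\<open>i \<noteq> j\<close>), whose inverse transpose is \<open>I - e\<^sub>j\<^sub>i\<close>, and subtracting gives
  \<open>a\<^sub>i b\<^sub>j\<^sup>T = b\<^sub>j a\<^sub>i\<^sup>T\<close> for the columns \<open>a\<^sub>i\<close> of \<open>A\<close> and \<open>b\<^sub>j\<close> of \<open>B\<close>. Over \<open>\<bbbF>\<^sub>2\<close> two nonzero
  vectors with symmetric outer product coincide, so every nonzero \<open>a\<^sub>i\<close> equals every nonzero
  \<open>b\<^sub>j\<close> with \<open>j \<noteq> i\<close>. If \<open>A\<close> and \<open>B\<close> were both nonzero, the nonzero columns of \<open>[A | B]\<close>
  would therefore take at most two values, and \<open>rank [A | B] \<le> 2 < k\<close>.\<close>

lemma matrix_inv_unique:
  fixes A :: "'a::semiring_1^'n^'m"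
  assumes "A ** B = mat 1" and "B ** A = mat 1"
  shows "matrix_inv A = B"
proof -
  let ?X = "matrix_inv A"
  have X: "A ** ?X = mat 1 \<and> ?X ** A = mat 1"
    unfolding matrix_inv_def by (rule someI[of _ B]) (use assms in simp)
  have "?X = (B ** A) ** ?X" using assms by simp
  also have "\<dots> = B" using X by (simp flip: matrix_mul_assoc)
  finally show ?thesis .
qed

lemma matrix_add_rdistrib: "((A::'a::semiring_1^'n^'m) + B) ** (C::'a^'p^'n) = A ** C + B ** C"
  by (vector matrix_matrix_mult_def sum.distrib[symmetric] field_simps)

lemma matrix_sandwich_entry:
  fixes X Z :: "'a::comm_semiring_1^'n^'m"
  shows "(X ** M ** transpose Z) $ p $ q = (\<Sum>r\<in>UNIV. \<Sum>s\<in>UNIV. X$p$r * M$r$s * Z$q$s)"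
  by (simp add: matrix_matrix_mult_def transpose_def sum_distrib_left sum_distrib_right mult.assoc)
     (rule sum.swap)

definition single_entry_matrix :: "'m \<Rightarrow> 'n \<Rightarrow> 'a::zero \<Rightarrow> 'a^'n^'m" where
  "single_entry_matrix i j c = (\<chi> r s. if r = i \<and> s = j then c else 0)"

lemma single_entry_matrix_add:
  "single_entry_matrix i j c + single_entry_matrix i j d = single_entry_matrix i j (c + d :: 'a::monoid_add)"
  by (simp add: single_entry_matrix_def vec_eq_iff)

lemma single_entry_matrix_mult_self:
  fixes c d :: "'a::semiring_1"
  assumes "i \<noteq> j"
  shows "single_entry_matrix i j c ** single_entry_matrix i j d = 0"
  using assms unfolding single_entry_matrix_def matrix_matrix_mult_def
  by (auto simp: vec_eq_iff intro!: sum.neutral)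

lemma single_entry_matrix_sandwich_entry:
  fixes X Z :: "'a::comm_semiring_1^'n^'m"
  shows "(X ** single_entry_matrix i j c ** transpose Z) $ p $ q = c * X$p$i * Z$q$j"
proof -
  have "(\<Sum>s\<in>UNIV. X$p$r * single_entry_matrix i j c $ r $ s * Z$q$s)
      = (if r = i then c * X$p$i * Z$q$j else 0)" for r
    by (cases "r = i") (simp_all add: single_entry_matrix_def if_distrib if_distribR mult_ac cong: if_cong)
  then show ?thesis
    by (simp add: matrix_sandwich_entry)
qed

definition transvection :: "'n \<Rightarrow> 'n \<Rightarrow> 'a::semiring_1 \<Rightarrow> 'a^'n^'n" where
  "transvection i j c = mat 1 + single_entry_matrix i j c"

lemma transvection_mult:
  fixes c d :: "'a::semiring_1"
  assumes "i \<noteq> j"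
  shows "transvection i j c ** transvection i j d = transvection i j (c + d)"
  using assms
  by (simp add: transvection_def matrix_add_ldistrib matrix_add_rdistrib single_entry_matrix_mult_self
      flip: single_entry_matrix_add add.assoc)

lemma transvection_zero: "transvection i j 0 = mat 1"
  by (simp add: transvection_def single_entry_matrix_def vec_eq_iff)

lemma transpose_transvection: "transpose (transvection i j c) = transvection j i c"
  by (auto simp: transvection_def single_entry_matrix_def mat_def transpose_def vec_eq_iff)

lemma
  fixes c :: "'a::ring_1"
  assumes "i \<noteq> j"
  shows invertible_transvection: "invertible (transvection i j c)"
    and matrix_inv_transvection: "matrix_inv (transvection i j c) = transvection i j (- c)"
proof -
  have "transvection i j c ** transvection i j (- c) = mat 1"
       "transvection i j (- c) ** transvection i j c = mat 1"
    using assms by (simp_all add: transvection_mult transvection_zero)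
  then show "invertible (transvection i j c)" "matrix_inv (transvection i j c) = transvection i j (- c)"
    by (auto simp: invertible_def intro: matrix_inv_unique)
qed

lemma transvection_sandwich_entry:
  fixes X Z :: "'a::comm_semiring_1^'n^'m"
  shows "(X ** transvection i j c ** transpose Z) $ p $ q = (X ** transpose Z) $ p $ q + c * X$p$i * Z$q$j"
  by (simp add: transvection_def matrix_add_ldistrib matrix_add_rdistrib single_entry_matrix_sandwich_entry)

lemma column_outer_products_symmetric:
  fixes A B :: "'a::comm_ring_1^'n^'m"
  assumes vanish: "\<forall>E :: 'a^'n^'n. invertible E \<longrightarrow>
           A ** E ** transpose B + B ** transpose (matrix_inv E) ** transpose A = 0"
    and "i \<noteq> j"
  shows "A$p$i * B$q$j = B$p$j * A$q$i"
proof -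
  have sandwich_sum: "(A ** transvection i j c ** transpose B) $ p $ q
      + (B ** transvection j i (- c) ** transpose A) $ p $ q = 0" for c :: 'a
  proof -
    have "A ** transvection i j c ** transpose B + B ** transvection j i (- c) ** transpose A = 0"
      using vanish[rule_format, OF invertible_transvection[OF \<open>i \<noteq> j\<close>]]
      by (simp add: matrix_inv_transvection[OF \<open>i \<noteq> j\<close>] transpose_transvection)
    then show ?thesis by (metis vector_add_component zero_index)
  qed
  from sandwich_sum[of 1] have "(A ** transpose B) $ p $ q + (B ** transpose A) $ p $ q
      + (A$p$i * B$q$j - B$p$j * A$q$i) = 0"
    by (simp add: transvection_sandwich_entry algebra_simps)
  moreover from sandwich_sum[of 0] have "(A ** transpose B) $ p $ q + (B ** transpose A) $ p $ q = 0"
    by (simp add: transvection_sandwich_entry)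
  ultimately show ?thesis by simp
qed

lemma bit_vec_eq_if_outer_product_symmetric:
  fixes a b :: "bit^'n"
  assumes "\<And>p q. a$p * b$q = b$p * a$q" and "a \<noteq> 0" and "b \<noteq> 0"
  shows "a = b"
proof -
  obtain p where p: "a$p = 1" using \<open>a \<noteq> 0\<close> by (auto simp: vec_eq_iff)
  obtain q where q: "b$q = 1" using \<open>b \<noteq> 0\<close> by (auto simp: vec_eq_iff)
  have "a$q = 1" using assms(1)[of p q] p q by (cases "a$q") auto
  then have "a$r = b$r" for r
    using assms(1)[of r q] by (simp only: q mult_1_right)
  then show ?thesis by (simp add: vec_eq_iff)
qed

lemma ex_two_values_if_cross_equal:
  fixes f g :: "'k \<Rightarrow> 'v::zero"
  assumes cross: "\<And>i j. i \<noteq> j \<Longrightarrow> f i \<noteq> 0 \<Longrightarrow> g j \<noteq> 0 \<Longrightarrow> f i = g j"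
    and "f i0 \<noteq> 0" and "g j0 \<noteq> 0"
  shows "\<exists>u w. range f \<union> range g \<subseteq> {0, u, w}"
proof -
  have cross_disj: "i = j \<or> f i = 0 \<or> g j = 0 \<or> f i = g j" for i j
    using cross by blast
  show ?thesis
  proof (cases "i0 = j0")
    case True
    have "f l \<in> {0, f i0, g i0}" "g l \<in> {0, f i0, g i0}" for l
      using cross_disj[of l i0] cross_disj[of i0 l] assms(2,3) True by auto
    then have "range f \<union> range g \<subseteq> {0, f i0, g i0}" by blast
    then show ?thesis by blast
  next
    case False
    define w where "w = (if f j0 = 0 then g i0 else f j0)"
    have "f l \<in> {0, f i0, w}" "g l \<in> {0, f i0, w}" for l
      using cross_disj[of l j0] cross_disj[of i0 j0] cross_disj[of i0 l] cross_disj[of j0 i0] assms(2,3) False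
      by (auto simp: w_def)
    then have "range f \<union> range g \<subseteq> {0, f i0, w}" by blast
    then show ?thesis by blast
  qed
qed

lemma columns_hcat: "columns (hcat A B) = columns A \<union> columns B"
proof -
  have "column (Inl a) (hcat A B) = column a A" "column (Inr b) (hcat A B) = column b B" for a b
    by (simp_all add: column_def hcat_def)
  then show ?thesis
    unfolding columns_def by (auto simp: split_sum_all split_sum_ex)
qed

lemma rank_le_card_nonzero_columns:
  fixes M :: "'a::field^'n^'m"
  shows "rank M \<le> card (columns M - {0})"
proof -
  let ?W = "columns M - {0}"
  \<comment> \<open>\<open>rank\<close> is the row rank: every row is a combination of the indicators \<open>R w\<close> of the
     columns equal to \<open>w\<close>.\<close>
  define R where "R w = (\<chi> c. if column c M = w then (1 :: 'a) else 0)" for w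
  have "finite ?W" by (simp add: columns_def full_SetCompr_eq)
  have row_eq: "row p M = (\<Sum>w\<in>?W. w$p *s R w)" for p
    unfolding vec_eq_iff
  proof
    fix c
    have "(\<Sum>w\<in>?W. w$p *s R w) $ c = (\<Sum>w\<in>?W. if column c M = w then w $ p else 0)"
      by (simp add: R_def if_distrib[where f = "(*) _"] cong: if_cong)
    also have "\<dots> = (if column c M \<in> ?W then column c M $ p else 0)"
      using \<open>finite ?W\<close> by (rule sum.delta')
    also have "\<dots> = row p M $ c"
      by (cases "column c M = 0") (auto simp: columns_def row_def column_def vec_eq_iff)
    finally show "row p M $ c = (\<Sum>w\<in>?W. w$p *s R w) $ c" ..
  qed
  have "rows M \<subseteq> vec.span (R ` ?W)"
    using vec.span_base[of _ "R ` ?W"] by (auto simp: rows_def row_eq intro!: vec.span_sum vec.span_scale)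
  then have "vec.dim (rows M) \<le> card (R ` ?W)"
    using \<open>finite ?W\<close> by (intro vec.dim_le_card) auto
  also have "\<dots> \<le> card ?W"
    using \<open>finite ?W\<close> by (rule card_image_le)
  finally show ?thesis by (simp add: row_rank_def_gen)
qed

theorem mainTheorem9:
  fixes A B :: "bit^'k^'k"
  assumes "CARD('k) \<ge> 3"
    and "rank (hcat A B) = CARD('k)"
    and "\<forall>E :: bit^'k^'k. invertible E \<longrightarrow>
           A ** E ** transpose B + B ** transpose (matrix_inv E) ** transpose A = 0"
  shows "A = 0 \<or> B = 0"
proof (rule ccontr)
  assume "\<not> (A = 0 \<or> B = 0)"
  then obtain i0 j0 where nonzero: "column i0 A \<noteq> 0" "column j0 B \<noteq> 0"
    by (auto simp: vec_eq_iff column_def)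
  have cross_eq: "column i A = column j B"
    if "i \<noteq> j" "column i A \<noteq> 0" "column j B \<noteq> 0" for i j
  proof (rule bit_vec_eq_if_outer_product_symmetric[OF _ that(2,3)])
    show "column i A $ p * column j B $ q = column j B $ p * column i A $ q" for p q
      unfolding column_def vec_lambda_beta
      by (rule column_outer_products_symmetric[OF assms(3) \<open>i \<noteq> j\<close>])
  qed
  obtain u w where "range (\<lambda>l. column l A) \<union> range (\<lambda>l. column l B) \<subseteq> {0, u, w}"
    using ex_two_values_if_cross_equal[of "\<lambda>l. column l A" "\<lambda>l. column l B", OF cross_eq nonzero]
    by blast
  then have "columns (hcat A B) - {0} \<subseteq> {u, w}"
    unfolding columns_hcat by (auto simp: columns_def)
  then have "card (columns (hcat A B) - {0}) \<le> card {u, w}"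
    by (intro card_mono) auto
  also have "\<dots> \<le> 2"
    by (simp add: card_insert_if)
  finally have "rank (hcat A B) \<le> 2"
    using rank_le_card_nonzero_columns order_trans by blast
  with assms(1,2) show False by linarith
qed

end
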